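(* Consider the time-varying Friedkin--Johnsen (TVFJ) dynamics described in the context, and let $t_0<t_d$ be integers. Fix $\epsilon>0$ and $w>0$. If the temporal graph $\mathcal{G}_{t_0}^{t_d}$ is a defected temporal graph (DTG) with stubbornness parameter $\epsilon$ and edge threshold $w$, then \[ \|\Phi(t_d,t_0)\| \le 1-\epsilon\, w^{\delta}, \qquad \delta := t_d-t_0 . \]
   Context: There are $n$ agents $\mathcal V=\{\mathrm v_1,\dots,\mathrm v_n\}$ with opinions $\mathbf x[t]\in\mathbb R^n$ and a fixed innate opinion vector $\mathbf s\in[0,1]^n$, evolving by the TVFJ model $\mathbf x[t+1]=\Lambda[t]W[t]\mathbf x[t]+(I-\Lambda[t])\mathbf s$, where $W[t]\in\mathbb R^{n\times n}$ is row-stochastic (nonnegative entries, each row summing to 1) and $\Lambda[t]=\mathrm{diag}(\lambda_1[t],\dots,\lambda_n[t])$ with $\lambda_i[t]\in[0,1]$. Standing assumptions: (i) $\lambda_i[t]=0$ if and only if $w_{ij}[t]=0$ for all $j$; (ii) there is no time $\tau$ with $\Lambda[\tau]=0$. The state transition matrix is $\Phi(t,\tau)=\Lambda[t-1]W[t-1]\cdots\Lambda[\tau]W[\tau]$ for $t>\tau$ and $\Phi(\tau,\tau)=I$. The matrix norm is $\|A\|:=\max_i\sum_j|a_{ij}|$. Graphs: at time $t$, $\mathcal G[t]=(\mathcal V,\mathcal E[t])$ has directed edge $(\mathrm v_j,\mathrm v_i)\in\mathcal E[t]$ iff $w_{ij}[t]>0$. The temporal graph on $[t_1,t_2]$ is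 the sequence of layers $\mathcal G_{t_1}^{t_2}=\{\mathcal G[k]\}_{k=t_1}^{t_2}$. A triple $(\mathrm v_j,\mathrm v_i,t)$ is a temporal edge if $(\mathrm v_j,\mathrm v_i)\in\mathcal E[t]$, and a $w$-edge if moreover $w_{ij}[t]\ge w$. A temporal path from $\mathrm v_j$ to $\mathrm v_i$ over $[t_{k_0},t_{k_m}]$ is a sequence of temporal edges $(\mathrm v_j,\mathrm v_{i_1},t_{k_0}),(\mathrm v_{i_1},\mathrm v_{i_2},t_{k_1}),\dots,(\mathrm v_{i_m},\mathrm v_i,t_{k_m})$ across successive time steps. Agent $\mathrm v_i$ is stubborn at time $t$ if $\lambda_i[t]<1$, and $\epsilon$-stubborn (strictly stubborn) if $\lambda_i[t]\le 1-\epsilon$. A temporal path is an influential path if its starting agent is $\epsilon$-stubborn and all its edges are $w$-edges. The temporal graph $\mathcal G_{t_0}^{t_d}$ is a defected temporal graph (DTG) if there exists $k\in[t_0,t_d)$ such that, in layer $\mathcal G[k]$, every agent is either $\epsilon$-stubborn or connected to an $\epsilon$-stubborn agent via a finite influential path entirely contained in $[t_0,t_d)$. *)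

theory Defs
  imports "HOL-Analysis.Analysis"
begin

text \<open>Agents are the elements of a finite type 'n; time is int.
  W t is the row-stochastic influence matrix W[t], lam t the vector
  (lambda_1[t],...,lambda_n[t]) so that Lambda[t] = diag_mat (lam t).\<close>

definition diag_mat :: "real^'n \<Rightarrow> real^'n^'n" where
  "diag_mat v = (\<chi> i j. if i = j then v $ i else 0)"

definition row_stochastic :: "real^'n^'n \<Rightarrow> bool" where
  "row_stochastic A \<longleftrightarrow> (\<forall>i j. 0 \<le> A $ i $ j) \<and> (\<forall>i. (\<Sum>j\<in>UNIV. A $ i $ j) = 1)"

definition tvfj_standing :: "(int \<Rightarrow> real^'n^'n) \<Rightarrow> (int \<Rightarrow> real^'n) \<Rightarrow> bool" where
  "tvfj_standing W lam \<longleftrightarrow>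
     (\<forall>t. row_stochastic (W t)) \<and>
     (\<forall>t i. 0 \<le> lam t $ i \<and> lam t $ i \<le> 1) \<and>
     (\<forall>t i. lam t $ i = 0 \<longleftrightarrow> (\<forall>j. W t $ i $ j = 0)) \<and>
     \<not> (\<exists>\<tau>. diag_mat (lam \<tau>) = 0)"

fun Phi_steps :: "(int \<Rightarrow> real^'n^'n) \<Rightarrow> (int \<Rightarrow> real^'n) \<Rightarrow> int \<Rightarrow> nat \<Rightarrow> real^'n^'n" where
  "Phi_steps W lam \<tau> 0 = mat 1"
| "Phi_steps W lam \<tau> (Suc k) =
     (diag_mat (lam (\<tau> + int k)) ** W (\<tau> + int k)) ** Phi_steps W lam \<tau> k"

text \<open>State transition matrix Phi(t,tau) (meaningful for t >= tau).\<close>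
definition Phi :: "(int \<Rightarrow> real^'n^'n) \<Rightarrow> (int \<Rightarrow> real^'n) \<Rightarrow> int \<Rightarrow> int \<Rightarrow> real^'n^'n" where
  "Phi W lam t \<tau> = Phi_steps W lam \<tau> (nat (t - \<tau>))"

definition mat_norm :: "real^'n^'n \<Rightarrow> real" where
  "mat_norm A = Max (range (\<lambda>i. \<Sum>j\<in>UNIV. \<bar>A $ i $ j\<bar>))"

definition temporal_edge :: "(int \<Rightarrow> real^'n^'n) \<Rightarrow> 'n \<Rightarrow> 'n \<Rightarrow> int \<Rightarrow> bool" where
  "temporal_edge W j i t \<longleftrightarrow> W t $ i $ j > 0"

definition w_edge :: "(int \<Rightarrow> real^'n^'n) \<Rightarrow> real \<Rightarrow> 'n \<Rightarrow> 'n \<Rightarrow> int \<Rightarrow> bool" where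
  "w_edge W w j i t \<longleftrightarrow> temporal_edge W j i t \<and> W t $ i $ j \<ge> w"

definition eps_stubborn :: "(int \<Rightarrow> real^'n) \<Rightarrow> real \<Rightarrow> 'n \<Rightarrow> int \<Rightarrow> bool" where
  "eps_stubborn lam eps i t \<longleftrightarrow> lam t $ i \<le> 1 - eps"

definition influential_path ::
  "(int \<Rightarrow> real^'n^'n) \<Rightarrow> (int \<Rightarrow> real^'n) \<Rightarrow> real \<Rightarrow> real \<Rightarrow> int \<Rightarrow> int
     \<Rightarrow> 'n \<Rightarrow> 'n \<Rightarrow> int \<Rightarrow> nat \<Rightarrow> bool" where
  "influential_path W lam eps w t0 td a i s m \<longleftrightarrow>
     (\<exists>p :: nat \<Rightarrow> 'n. p 0 = a \<and> p m = i \<and> 0 < m \<and>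
        eps_stubborn lam eps a s \<and> t0 \<le> s \<and> s + int m < td \<and>
        (\<forall>l\<in>{1..m}. w_edge W w (p (l - 1)) (p l) (s + int l)))"

definition DTG ::
  "(int \<Rightarrow> real^'n^'n) \<Rightarrow> (int \<Rightarrow> real^'n) \<Rightarrow> real \<Rightarrow> real \<Rightarrow> int \<Rightarrow> int \<Rightarrow> bool" where
  "DTG W lam eps w t0 td \<longleftrightarrow>
     (\<exists>k. t0 \<le> k \<and> k < td \<and>
        (\<forall>i. eps_stubborn lam eps i k \<or>
             (\<exists>a s m. influential_path W lam eps w t0 td a i s m \<and> s + int m = k)))"

end

theory Submission
  imports Defs
begin

text \<open>Since \<open>\<Phi>(t, t\<^sub>0)\<close> is entrywise nonnegative, its norm is the largest entry of its
  row-sum vector \<open>u(t) = \<Phi>(t, t\<^sub>0) 1\<close>, which obeys \<open>u(t+1) = \<Lambda>[t] W[t] u(t)\<close> and stays in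
  \<open>[0, 1]\<close>. A bound \<open>u(t) \<le> c\<close> persists, since averaging and damping cannot increase the
  maximum. An \<open>\<epsilon>\<close>-stubborn agent at time \<open>s\<close> has \<open>u(s+1) \<le> 1 - \<epsilon>\<close>, and a \<open>w\<close>-edge from
  \<open>a\<close> to \<open>i\<close> at time \<open>t\<close> passes a deficit \<open>1 - u(t)\<^sub>a \<ge> c\<close> on as \<open>1 - u(t+1)\<^sub>i \<ge> w c\<close>.
  Following an influential path of length \<open>m < \<delta>\<close>, every agent thus has deficit at least
  \<open>\<epsilon> w\<^sup>m \<ge> \<epsilon> w\<^sup>\<delta>\<close> at the defected layer, and it persists up to \<open>t\<^sub>d\<close>.\<close>

lemma diag_mat_mult_vec_index: "(diag_mat v *v x) $ i = v $ i * x $ i"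
  unfolding diag_mat_def matrix_vector_mult_def
  by (simp add: if_distrib if_distribR sum.delta cong: if_cong)

lemma row_stochastic_mult_vec_nonneg:
  assumes "row_stochastic A" "\<And>j. 0 \<le> x $ j"
  shows "0 \<le> (A *v x) $ i"
  using assms unfolding row_stochastic_def matrix_vector_mult_def
  by (auto intro!: sum_nonneg)

lemma row_stochastic_mult_vec_le:
  assumes "row_stochastic A" "\<And>j. x $ j \<le> c"
  shows "(A *v x) $ i \<le> c"
proof -
  have "(A *v x) $ i \<le> (\<Sum>j\<in>UNIV. A $ i $ j * c)"
    using assms unfolding row_stochastic_def matrix_vector_mult_def
    by (auto intro!: sum_mono mult_left_mono)
  also have "\<dots> = c"
    using assms(1) by (simp add: row_stochastic_def flip: sum_distrib_right)
  finally show ?thesis .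
qed

lemma row_stochastic_deficit_ge:
  assumes "row_stochastic A" "\<And>j. x $ j \<le> 1"
  shows "A $ i $ a * (1 - x $ a) \<le> 1 - (A *v x) $ i"
proof -
  have "A $ i $ a * (1 - x $ a) \<le> (\<Sum>j\<in>UNIV. A $ i $ j * (1 - x $ j))"
    using assms unfolding row_stochastic_def
    by (intro member_le_sum[where f = "\<lambda>j. A $ i $ j * (1 - x $ j)"]) auto
  also have "\<dots> = 1 - (A *v x) $ i"
    using assms(1)
    by (simp add: row_stochastic_def matrix_vector_mult_def algebra_simps sum_subtractf)
  finally show ?thesis .
qed

lemma mat_norm_le_iff_row_sums_le:
  assumes "\<And>i j. 0 \<le> A $ i $ j"
  shows "mat_norm A \<le> c \<longleftrightarrow> (\<forall>i. (A *v 1) $ i \<le> c)"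
proof -
  have "(\<Sum>j\<in>UNIV. \<bar>A $ i $ j\<bar>) = (A *v 1) $ i" for i
    using assms by (simp add: matrix_vector_mult_def)
  then show ?thesis
    unfolding mat_norm_def by (subst Max_le_iff) auto
qed

lemma Phi_eq_mat_1:
  assumes "t \<le> \<tau>"
  shows "Phi W lam t \<tau> = mat 1"
  using assms by (simp add: Phi_def)

lemma Phi_succ:
  assumes "\<tau> \<le> t"
  shows "Phi W lam (t + 1) \<tau> = (diag_mat (lam t) ** W t) ** Phi W lam t \<tau>"
proof -
  have "nat (t + 1 - \<tau>) = Suc (nat (t - \<tau>))" "\<tau> + int (nat (t - \<tau>)) = t"
    using assms by auto
  then show ?thesis
    unfolding Phi_def by simp
qed

definition Phi_row_sums :: "(int \<Rightarrow> real^'n^'n) \<Rightarrow> (int \<Rightarrow> real^'n) \<Rightarrow> int \<Rightarrow> int \<Rightarrow> real^'n" where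
  "Phi_row_sums W lam t \<tau> = Phi W lam t \<tau> *v 1"

lemma Phi_row_sums_succ:
  assumes "\<tau> \<le> t"
  shows "Phi_row_sums W lam (t + 1) \<tau> $ i = lam t $ i * (W t *v Phi_row_sums W lam t \<tau>) $ i"
  using assms
  by (simp add: Phi_row_sums_def Phi_succ diag_mat_mult_vec_index flip: matrix_vector_mul_assoc)

context
  fixes W :: "int \<Rightarrow> real^'n^'n" and lam :: "int \<Rightarrow> real^'n"
  assumes standing: "tvfj_standing W lam"
begin

lemma W_row_stochastic: "row_stochastic (W t)"
  using standing by (simp add: tvfj_standing_def)

lemma lam_nonneg: "0 \<le> lam t $ i"
  using standing by (simp add: tvfj_standing_def)

lemma lam_le_one: "lam t $ i \<le> 1"
  using standing by (simp add: tvfj_standing_def)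

lemma Phi_nonneg: "0 \<le> Phi W lam t \<tau> $ i $ j"
proof -
  have "0 \<le> Phi_steps W lam \<tau> n $ i $ j" for n
  proof (induction n arbitrary: i j)
    case 0
    then show ?case by (simp add: mat_def)
  next
    case (Suc n)
    have "0 \<le> (diag_mat (lam (\<tau> + int n)) ** W (\<tau> + int n)) $ i $ k" for i k
      using W_row_stochastic lam_nonneg
      by (simp add: matrix_matrix_mult_def diag_mat_def row_stochastic_def if_distrib
          if_distribR sum.delta cong: if_cong)
    with Suc show ?case
      by (auto simp: matrix_matrix_mult_def intro!: sum_nonneg)
  qed
  then show ?thesis
    by (simp add: Phi_def)
qed

lemma Phi_row_sums_nonneg: "0 \<le> Phi_row_sums W lam t \<tau> $ i"
  using Phi_nonneg by (simp add: Phi_row_sums_def matrix_vector_mult_def sum_nonneg)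

lemma Phi_row_sums_succ_le_mult_W:
  assumes "\<tau> \<le> t"
  shows "Phi_row_sums W lam (t + 1) \<tau> $ i \<le> (W t *v Phi_row_sums W lam t \<tau>) $ i"
proof -
  have "0 \<le> (W t *v Phi_row_sums W lam t \<tau>) $ i"
    using W_row_stochastic Phi_row_sums_nonneg by (rule row_stochastic_mult_vec_nonneg)
  then show ?thesis
    using assms by (simp add: Phi_row_sums_succ mult_left_le_one_le lam_nonneg lam_le_one)
qed

lemma Phi_row_sums_succ_le:
  assumes "\<tau> \<le> t" "\<And>j. Phi_row_sums W lam t \<tau> $ j \<le> c"
  shows "Phi_row_sums W lam (t + 1) \<tau> $ i \<le> c"
  using Phi_row_sums_succ_le_mult_W[OF assms(1)] row_stochastic_mult_vec_le[OF W_row_stochastic assms(2)]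
  by (rule order_trans)

lemma Phi_row_sums_le_persist:
  assumes "\<tau> \<le> t" "t \<le> t'" "\<And>j. Phi_row_sums W lam t \<tau> $ j \<le> c"
  shows "Phi_row_sums W lam t' \<tau> $ i \<le> c"
  using assms(2)
proof (induction t' arbitrary: i rule: int_ge_induct)
  case base
  then show ?case using assms(3) .
next
  case (step t')
  then show ?case
    using assms(1) by (intro Phi_row_sums_succ_le) auto
qed

lemma Phi_row_sums_le_one: "Phi_row_sums W lam t \<tau> $ i \<le> 1"
proof -
  have init: "Phi_row_sums W lam t' \<tau> $ j \<le> 1" if "t' \<le> \<tau>" for t' j
    using that by (simp add: Phi_row_sums_def Phi_eq_mat_1)
  show ?thesis
  proof (cases "\<tau> \<le> t")
    case True
    show ?thesis
      by (rule Phi_row_sums_le_persist[OF order_refl True init[OF order_refl]])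
  qed (simp add: init)
qed

lemma Phi_row_sums_succ_le_stubborn:
  assumes "\<tau> \<le> t" "eps_stubborn lam eps i t"
  shows "Phi_row_sums W lam (t + 1) \<tau> $ i \<le> 1 - eps"
proof -
  let ?y = "(W t *v Phi_row_sums W lam t \<tau>) $ i"
  have "lam t $ i * ?y \<le> lam t $ i"
    using W_row_stochastic Phi_row_sums_nonneg Phi_row_sums_le_one
    by (intro mult_left_le lam_nonneg row_stochastic_mult_vec_le)
  also have "\<dots> \<le> 1 - eps"
    using assms(2) by (simp add: eps_stubborn_def)
  finally show ?thesis
    using assms(1) by (simp add: Phi_row_sums_succ)
qed

lemma Phi_row_sums_succ_le_w_edge:
  assumes "\<tau> \<le> t" "w_edge W w a i t" "0 \<le> c" "Phi_row_sums W lam t \<tau> $ a \<le> 1 - c"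
  shows "Phi_row_sums W lam (t + 1) \<tau> $ i \<le> 1 - w * c"
proof -
  let ?u = "Phi_row_sums W lam t \<tau>"
  let ?y = "(W t *v ?u) $ i"
  have "w * c \<le> W t $ i $ a * (1 - ?u $ a)"
    using assms W_row_stochastic unfolding w_edge_def row_stochastic_def
    by (intro mult_mono) auto
  also have "\<dots> \<le> 1 - ?y"
    using W_row_stochastic Phi_row_sums_le_one by (rule row_stochastic_deficit_ge)
  finally show ?thesis
    using Phi_row_sums_succ_le_mult_W[OF assms(1), of i] by linarith
qed

lemma Phi_row_sums_le_influential_path:
  assumes "influential_path W lam eps w t0 td a i s m" "0 \<le> eps" "0 \<le> w"
  shows "Phi_row_sums W lam (s + int m + 1) t0 $ i \<le> 1 - eps * w ^ m"
proof -
  obtain p where p: "p 0 = a" "p m = i" and stubborn: "eps_stubborn lam eps a s"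
    and "t0 \<le> s" and edges: "\<forall>l\<in>{1..m}. w_edge W w (p (l - 1)) (p l) (s + int l)"
    using assms(1) unfolding influential_path_def by blast
  have "Phi_row_sums W lam (s + int l + 1) t0 $ p l \<le> 1 - eps * w ^ l" if "l \<le> m" for l
    using that
  proof (induction l)
    case 0
    show ?case
      using Phi_row_sums_succ_le_stubborn[OF \<open>t0 \<le> s\<close> stubborn] p by simp
  next
    case (Suc l)
    have edge: "w_edge W w (p l) (p (Suc l)) (s + int l + 1)"
      using bspec[OF edges, of "Suc l"] Suc.prems by (simp add: algebra_simps)
    have "Phi_row_sums W lam (s + int l + 1 + 1) t0 $ p (Suc l) \<le> 1 - w * (eps * w ^ l)"
      by (rule Phi_row_sums_succ_le_w_edge[OF _ edge]) (use \<open>t0 \<le> s\<close> Suc assms(2,3) in auto)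
    then show ?case
      by (simp add: algebra_simps)
  qed
  then show ?thesis
    using p by fastforce
qed

lemma Phi_row_sums_le_covered:
  assumes "t0 \<le> k" "k < td" "0 \<le> eps" "0 \<le> w" "w \<le> 1"
    and covered: "eps_stubborn lam eps i k \<or>
      (\<exists>a s m. influential_path W lam eps w t0 td a i s m \<and> s + int m = k)"
  shows "Phi_row_sums W lam (k + 1) t0 $ i \<le> 1 - eps * w ^ nat (td - t0)"
  using covered
proof
  assume "eps_stubborn lam eps i k"
  moreover have "eps * w ^ nat (td - t0) \<le> eps"
    using assms(3-5) by (simp add: mult_left_le power_le_one)
  ultimately show ?thesis
    using Phi_row_sums_succ_le_stubborn[OF assms(1)] by fastforce
next
  assume "\<exists>a s m. influential_path W lam eps w t0 td a i s m \<and> s + int m = k"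
  then obtain a s m where path: "influential_path W lam eps w t0 td a i s m" and "s + int m = k"
    by blast
  moreover have "m \<le> nat (td - t0)"
    using path \<open>s + int m = k\<close> assms(2) by (auto simp: influential_path_def)
  then have "eps * w ^ nat (td - t0) \<le> eps * w ^ m"
    using assms(3-5) by (intro mult_left_mono power_decreasing) auto
  ultimately show ?thesis
    using Phi_row_sums_le_influential_path[OF path assms(3,4)] by fastforce
qed

end

theorem lemma1:
  fixes W :: "int \<Rightarrow> real^'n^'n" and lam :: "int \<Rightarrow> real^'n"
    and t0 td :: int and eps w :: real
  assumes "tvfj_standing W lam"
    and "t0 < td"
    and "eps > 0" and "w > 0" and "w \<le> 1"
    and "DTG W lam eps w t0 td"
  shows "mat_norm (Phi W lam td t0) \<le> 1 - eps * w ^ nat (td - t0)"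
proof -
  obtain k where k: "t0 \<le> k" "k < td"
    and covered: "\<And>i. eps_stubborn lam eps i k \<or>
      (\<exists>a s m. influential_path W lam eps w t0 td a i s m \<and> s + int m = k)"
    using assms(6) unfolding DTG_def by blast
  have layer: "Phi_row_sums W lam (k + 1) t0 $ i \<le> 1 - eps * w ^ nat (td - t0)" for i
    using Phi_row_sums_le_covered[OF assms(1) k] covered assms(3-5) by simp
  have "Phi_row_sums W lam td t0 $ i \<le> 1 - eps * w ^ nat (td - t0)" for i
    by (rule Phi_row_sums_le_persist[OF assms(1) _ _ layer]) (use k in auto)
  then show ?thesis
    unfolding Phi_row_sums_def
    by (subst mat_norm_le_iff_row_sums_le) (use Phi_nonneg[OF assms(1)] in auto)
qed

end
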